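(* Let $G$ be an interval graph with interval representation $\{I_u\}_{u\in V(G)}$. Let $D$ be the digraph with $V(D)=E(G)$ whose arcs are given by the interval nest representation $\{(S_e,T_e)\}_{e\in V(D)}$ where, for $e=uv\in E(G)$, $S_e=I_u\cup I_v$ and $T_e=I_u\cap I_v$; that is, for distinct $e,e'\in E(G)$, $(e,e')$ is an arc of $D$ iff $S_e\cap T_{e'}\neq\emptyset$. Then for any $S\subseteq E(G)$, $S$ is a strong independent set in $D$ if and only if $S$ is a uniquely restricted matching in $G$.
   Context: Graphs are finite, simple, undirected. An interval representation of a graph $G$ is a family $\{I_u\}_{u\in V(G)}$ of closed real intervals with $uv\in E(G)$ iff $I_u\cap I_v\neq\emptyset$ for distinct $u,v$; interval graphs are those having one. (For an edge $uv$, $I_u\cap I_v\ne\emptyset$ so $I_u\cup I_v$ and $I_u\cap I_v$ are intervals.) A matching is a set of pairwise vertex-disjoint edges; it is uniquely restricted if no other matching of $G$ matches exactly the same vertex set. In a digraph, a set $S$ of vertices is a strong independent set if for any two $u,v\in S$, $(u,v)$ or $(v,u)$ is not an arc. *)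

theory Defs
  imports Complex_Main
begin

definition closed_interval :: "real set \<Rightarrow> bool" where
  "closed_interval A \<longleftrightarrow> (\<exists>a b. a \<le> b \<and> A = {a..b})"

definition interval_edges :: "'a set \<Rightarrow> ('a \<Rightarrow> real set) \<Rightarrow> 'a set set" where
  "interval_edges V I = {{u, v} | u v. u \<in> V \<and> v \<in> V \<and> u \<noteq> v \<and> I u \<inter> I v \<noteq> {}}"

definition nestS :: "('a \<Rightarrow> real set) \<Rightarrow> 'a set \<Rightarrow> real set" where
  "nestS I e = (\<Union>u\<in>e. I u)"

definition nestT :: "('a \<Rightarrow> real set) \<Rightarrow> 'a set \<Rightarrow> real set" where
  "nestT I e = (\<Inter>u\<in>e. I u)"

definition nest_arc :: "'a set set \<Rightarrow> ('a \<Rightarrow> real set) \<Rightarrow> 'a set \<Rightarrow> 'a set \<Rightarrow> bool" where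
  "nest_arc E I e e' \<longleftrightarrow> e \<in> E \<and> e' \<in> E \<and> e \<noteq> e' \<and> nestS I e \<inter> nestT I e' \<noteq> {}"

definition strong_independent :: "('b \<Rightarrow> 'b \<Rightarrow> bool) \<Rightarrow> 'b set \<Rightarrow> bool" where
  "strong_independent arc S \<longleftrightarrow> (\<forall>x\<in>S. \<forall>y\<in>S. \<not> arc x y \<or> \<not> arc y x)"

definition matching :: "'a set set \<Rightarrow> 'a set set \<Rightarrow> bool" where
  "matching E M \<longleftrightarrow> M \<subseteq> E \<and> (\<forall>e\<in>M. \<forall>f\<in>M. e \<noteq> f \<longrightarrow> e \<inter> f = {})"

definition uniquely_restricted_matching :: "'a set set \<Rightarrow> 'a set set \<Rightarrow> bool" where
  "uniquely_restricted_matching E M \<longleftrightarrow> matching E M \<and>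
     (\<forall>M'. matching E M' \<and> \<Union>M' = \<Union>M \<longrightarrow> M' = M)"

end

theory Submission
  imports Defs
begin

text \<open>
  Two adjacent edges always carry arcs in both directions, so a strong independent set is a
  matching. If two edges \<open>e, f\<close> of a matching carry arcs both ways, then an endpoint of \<open>e\<close>
  meets both intervals of \<open>f\<close> and vice versa, so the four endpoints can be rematched and the
  matching is not uniquely restricted. Conversely, let \<open>M \<noteq> M'\<close> be matchings covering the
  same vertices; discarding common edges we may assume them disjoint. Let \<open>x\<close> be the covered
  vertex whose interval ends first, and follow the alternating path \<open>z x y u\<close> with
  \<open>xy, zw \<in> M\<close> and \<open>xz, yu \<in> M'\<close>. Either \<open>xy\<close> and \<open>zw\<close> carry arcs both ways, or \<open>zu\<close> is an
  edge, and replacing \<open>xz, yu\<close> by \<open>zu\<close> in \<open>M'\<close> gives a smaller instance for \<open>M - {xy}\<close>.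
\<close>

lemma matching_subset: "matching E M \<Longrightarrow> N \<subseteq> M \<Longrightarrow> matching E N"
  unfolding matching_def by blast

lemma matching_disjoint: "matching E M \<Longrightarrow> e \<in> M \<Longrightarrow> f \<in> M \<Longrightarrow> e \<noteq> f \<Longrightarrow> e \<inter> f = {}"
  unfolding matching_def by blast

lemma matching_edges_eq: "matching E M \<Longrightarrow> e \<in> M \<Longrightarrow> f \<in> M \<Longrightarrow> x \<in> e \<Longrightarrow> x \<in> f \<Longrightarrow> e = f"
  using matching_disjoint by blast

lemma Union_Diff_matching:
  assumes "matching E M" "K \<subseteq> M"
  shows "\<Union>(M - K) = \<Union>M - \<Union>K"
proof
  show "\<Union>(M - K) \<subseteq> \<Union>M - \<Union>K"
  proof
    fix x assume "x \<in> \<Union>(M - K)"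
    then obtain k where k: "k \<in> M - K" "x \<in> k" by blast
    have "x \<notin> k'" if "k' \<in> K" for k'
      using that k assms(2) matching_edges_eq[OF assms(1), of k k' x] by blast
    with k show "x \<in> \<Union>M - \<Union>K" by blast
  qed
qed blast

lemma matching_exchange:
  assumes "matching E M" "e \<in> M" "f \<in> M" "e' \<in> E" "f' \<in> E" "e' \<inter> f' = {}" "e' \<union> f' = e \<union> f"
  shows "matching E (M - {e, f} \<union> {e', f'})" and "\<Union>(M - {e, f} \<union> {e', f'}) = \<Union>M"
proof -
  have away: "k \<inter> e' = {}" "k \<inter> f' = {}" if "k \<in> M - {e, f}" for k
  proof -
    have "k \<inter> e = {}" "k \<inter> f = {}"
      using that assms(2,3) matching_disjoint[OF assms(1)] by blast+
    then show "k \<inter> e' = {}" "k \<inter> f' = {}" using assms(7) by blast+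
  qed
  have "M \<subseteq> E" using assms(1) unfolding matching_def by blast
  then show "matching E (M - {e, f} \<union> {e', f'})"
    unfolding matching_def
    using assms(4-6) away matching_disjoint[OF assms(1)] by (auto simp: Int_commute)
  show "\<Union>(M - {e, f} \<union> {e', f'}) = \<Union>M"
    using assms(2,3,7) by blast
qed
lemma alternating_path_shortcut:
  assumes "matching E M" "matching E M'" "\<Union>M' = \<Union>M" "M \<inter> M' = {}"
    and "{x, y} \<in> M" "{x, z} \<in> M'" "{y, u} \<in> M'" "{z, w} \<in> M" "{z, u} \<in> E"
    and "x \<noteq> z" "y \<noteq> u" "u \<noteq> w"
  obtains N where "matching E N" "\<Union>N = \<Union>(M - {{x, y}})" "(M - {{x, y}}) \<inter> N = {}"
proof -
  let ?e = "{x, y}" and ?g = "{x, z}" and ?h = "{y, u}" and ?zu = "{z, u}"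
  have "?g \<noteq> ?e" "?h \<noteq> ?e" using assms(4-7) by (metis IntI empty_iff)+
  then have "z \<noteq> y" "u \<noteq> x" by (auto simp: insert_commute)
  then have disj: "?e \<inter> ?zu = {}" and cover: "?e \<union> ?zu = ?g \<union> ?h"
    using assms(10,11) by auto
  have "?e \<in> E" using assms(1,5) unfolding matching_def by blast
  note M'' = matching_exchange[OF assms(2,6,7) this assms(9) disj cover]
  define N where "N = M' - {?g, ?h} \<union> {?e, ?zu} - {?e}"
  show thesis
  proof
    show "matching E N" unfolding N_def by (rule matching_subset[OF M''(1) Diff_subset])
    have "\<Union>N = \<Union>M' - ?e"
      using Union_Diff_matching[OF M''(1), of "{?e}"] M''(2) unfolding N_def by simp
    also have "\<dots> = \<Union>(M - {?e})"
      using Union_Diff_matching[OF assms(1), of "{?e}"] assms(3,5) by simp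
    finally show "\<Union>N = \<Union>(M - {?e})" .
    have "?zu \<noteq> {z, w}" using assms(12) by (auto simp: doubleton_eq_iff)
    then have "?zu \<notin> M" using matching_edges_eq[OF assms(1) _ assms(8), of ?zu z] by blast
    then show "(M - {?e}) \<inter> N = {}" using assms(4) unfolding N_def by blast
  qed
qed

lemma nestS_doubleton [simp]: "nestS I {a, b} = I a \<union> I b"
  by (auto simp: nestS_def)

lemma nestT_doubleton [simp]: "nestT I {a, b} = I a \<inter> I b"
  by (auto simp: nestT_def)

lemma doubleton_in_interval_edges_iff:
  "{x, y} \<in> interval_edges V I \<longleftrightarrow> x \<in> V \<and> y \<in> V \<and> x \<noteq> y \<and> I x \<inter> I y \<noteq> {}"
  unfolding interval_edges_def by (auto simp: doubleton_eq_iff Int_commute)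

lemma interval_edgesE:
  assumes "e \<in> interval_edges V I" "x \<in> e"
  obtains y where "e = {x, y}" "x \<noteq> y" "x \<in> V" "y \<in> V" "I x \<inter> I y \<noteq> {}"
  using assms unfolding interval_edges_def by (auto simp: insert_commute Int_commute)

lemma interval_edges_subset_Pow: "interval_edges V I \<subseteq> Pow V"
  unfolding interval_edges_def by auto

lemma finite_interval_edge: "e \<in> interval_edges V I \<Longrightarrow> finite e"
  unfolding interval_edges_def by auto

lemma interval_edge_nonempty: "e \<in> interval_edges V I \<Longrightarrow> e \<noteq> {}"
  unfolding interval_edges_def by auto

lemma nestT_interval_edge_nonempty: "e \<in> interval_edges V I \<Longrightarrow> nestT I e \<noteq> {}"
  unfolding interval_edges_def nestT_def by auto

lemma nest_arc_if_adjacent: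
  assumes "e \<in> interval_edges V I" "f \<in> interval_edges V I" "e \<noteq> f" "e \<inter> f \<noteq> {}"
  shows "nest_arc (interval_edges V I) I e f"
proof -
  obtain a where "a \<in> e" "a \<in> f" using assms(4) by blast
  then have "nestT I f \<subseteq> nestS I e" unfolding nestS_def nestT_def by blast
  then show ?thesis
    using nestT_interval_edge_nonempty[OF assms(2)] assms(1-3) unfolding nest_arc_def by blast
qed

lemma strong_independent_imp_matching:
  assumes "S \<subseteq> interval_edges V I" "strong_independent (nest_arc (interval_edges V I) I) S"
  shows "matching (interval_edges V I) S"
  unfolding matching_def
proof (intro conjI assms(1) ballI impI)
  fix e f assume ef: "e \<in> S" "f \<in> S" "e \<noteq> f"
  show "e \<inter> f = {}"
  proof (rule ccontr)
    assume "e \<inter> f \<noteq> {}"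
    then have "nest_arc (interval_edges V I) I e f" "nest_arc (interval_edges V I) I f e"
      using ef assms(1) nest_arc_if_adjacent[of _ V I] by (auto simp: Int_commute)
    then show False using ef assms(2) unfolding strong_independent_def by blast
  qed
qed

context
  fixes V :: "'a set" and I :: "'a \<Rightarrow> real set" and l r :: "'a \<Rightarrow> real"
  assumes interval: "\<And>u. u \<in> V \<Longrightarrow> l u \<le> r u \<and> I u = {l u..r u}"
begin

lemma interval_Int_nonempty_iff:
  assumes "u \<in> V" "v \<in> V"
  shows "I u \<inter> I v \<noteq> {} \<longleftrightarrow> l u \<le> r v \<and> l v \<le> r u"
proof
  assume "I u \<inter> I v \<noteq> {}"
  then show "l u \<le> r v \<and> l v \<le> r u" using interval[OF assms(1)] interval[OF assms(2)] by auto
next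
  assume "l u \<le> r v \<and> l v \<le> r u"
  then have "max (l u) (l v) \<in> I u \<inter> I v" using interval[OF assms(1)] interval[OF assms(2)] by auto
  then show "I u \<inter> I v \<noteq> {}" by blast
qed

lemma double_arc_at_leftmost_right_end:
  assumes "x \<in> V" "y \<in> V" "z \<in> V" "w \<in> V" "u \<in> V"
    and "I x \<inter> I y \<noteq> {}" "I x \<inter> I z \<noteq> {}" "I y \<inter> I u \<noteq> {}" "I z \<inter> I w \<noteq> {}"
    and "r x \<le> r y" "r x \<le> r z" "r x \<le> r w" "r x \<le> r u"
    and "u = w \<or> I z \<inter> I u = {}"
  shows "nestS I {z, w} \<inter> nestT I {x, y} \<noteq> {}" "nestS I {x, y} \<inter> nestT I {z, w} \<noteq> {}"
proof -
  note iv = interval[OF assms(1)] interval[OF assms(2)] interval[OF assms(3)]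
    interval[OF assms(4)] interval[OF assms(5)]
  have int: "l y \<le> r x" "l z \<le> r x" "l u \<le> r y" "l w \<le> r z" "l z \<le> r w"
    using assms(6-9) interval_Int_nonempty_iff[OF assms(1,2)] interval_Int_nonempty_iff[OF assms(1,3)]
      interval_Int_nonempty_iff[OF assms(2,5)] interval_Int_nonempty_iff[OF assms(3,4)] by auto
  have "r x \<in> I x \<inter> I y \<inter> I z" using iv int assms(10,11) by auto
  then show "nestS I {z, w} \<inter> nestT I {x, y} \<noteq> {}" by auto
  \<comment> \<open>If \<open>u \<noteq> w\<close>, then \<open>I u\<close> misses \<open>I z\<close> and ends after it, so \<open>l w \<le> r z < l u \<le> r y\<close>.\<close>
  have "l w \<le> r y"
  proof (cases "u = w")
    case False
    then have "\<not> (l z \<le> r u \<and> l u \<le> r z)"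
      using assms(14) interval_Int_nonempty_iff[OF assms(3,5)] by blast
    then show ?thesis using int assms(11,13) by linarith
  qed (use int in simp)
  then have "max (l y) (max (l z) (l w)) \<in> I y \<inter> I z \<inter> I w"
    using iv int assms(10-12) by auto
  then show "nestS I {x, y} \<inter> nestT I {z, w} \<noteq> {}" by auto
qed

lemma disjoint_matchings_double_arc:
  assumes "finite M" "matching (interval_edges V I) M" "matching (interval_edges V I) M'"
    and "\<Union>M' = \<Union>M" "M \<inter> M' = {}" "M \<noteq> {}"
  shows "\<exists>e\<in>M. \<exists>f\<in>M. nest_arc (interval_edges V I) I e f \<and> nest_arc (interval_edges V I) I f e"
  using assms
proof (induction "card M" arbitrary: M M' rule: less_induct)
  case less
  let ?E = "interval_edges V I"
  have ME: "M \<subseteq> ?E" "M' \<subseteq> ?E" using less.prems(2,3) unfolding matching_def by blast+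
  have "finite (\<Union>M)" using less.prems(1) ME(1) finite_interval_edge by blast
  moreover have "\<Union>M \<noteq> {}" using less.prems(6) ME(1) interval_edge_nonempty by blast
  ultimately obtain x where "x \<in> \<Union>M" and x_min: "\<And>v. v \<in> \<Union>M \<Longrightarrow> r x \<le> r v"
    using ex_min_if_finite[of "r ` \<Union>M"]
    by (metis (no_types, lifting) finite_imageI imageE image_eqI image_is_empty not_le)
  then obtain e where "e \<in> M" "x \<in> e" by blast
  then obtain y where e: "e = {x, y}" "x \<noteq> y" "x \<in> V" "y \<in> V" "I x \<inter> I y \<noteq> {}"
    using ME(1) by (blast elim: interval_edgesE)
  have "x \<in> \<Union>M'" "y \<in> \<Union>M'" using less.prems(4) \<open>e \<in> M\<close> e(1) by blast+
  then obtain g h where "g \<in> M'" "x \<in> g" "h \<in> M'" "y \<in> h" by blast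
  obtain z where g: "g = {x, z}" "x \<noteq> z" "z \<in> V" "I x \<inter> I z \<noteq> {}"
    using ME(2) \<open>g \<in> M'\<close> \<open>x \<in> g\<close> by (blast elim: interval_edgesE)
  obtain u where h: "h = {y, u}" "y \<noteq> u" "u \<in> V" "I y \<inter> I u \<noteq> {}"
    using ME(2) \<open>h \<in> M'\<close> \<open>y \<in> h\<close> by (blast elim: interval_edgesE)
  have "z \<in> \<Union>M" using less.prems(4) \<open>g \<in> M'\<close> g(1) by blast
  then obtain f where "f \<in> M" "z \<in> f" by blast
  then obtain w where f: "f = {z, w}" "w \<in> V" "I z \<inter> I w \<noteq> {}"
    using ME(1) by (blast elim: interval_edgesE)
  have "u \<in> \<Union>M" using less.prems(4) \<open>h \<in> M'\<close> h(1) by blast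
  then have r_min: "r x \<le> r y" "r x \<le> r z" "r x \<le> r w" "r x \<le> r u"
    using x_min \<open>e \<in> M\<close> e(1) \<open>f \<in> M\<close> f(1) \<open>z \<in> \<Union>M\<close> by blast+
  have "g \<noteq> e" using less.prems(5) \<open>e \<in> M\<close> \<open>g \<in> M'\<close> by blast
  then have "z \<noteq> y" using e(1) g(1) by blast
  then have "e \<noteq> f" using e(1) f(1) g(2) by blast
  show ?case
  proof (cases "u = w \<or> I z \<inter> I u = {}")
    case True
    from double_arc_at_leftmost_right_end[OF e(3,4) g(3) f(2) h(3) e(5) g(4) h(4) f(3) r_min True]
    have "nest_arc ?E I e f" "nest_arc ?E I f e"
      using ME(1) \<open>e \<in> M\<close> \<open>f \<in> M\<close> \<open>e \<noteq> f\<close> e(1) f(1) unfolding nest_arc_def by auto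
    then show ?thesis using \<open>e \<in> M\<close> \<open>f \<in> M\<close> by blast
  next
    case False
    have "g \<noteq> h" using e(2) g(1,2) h(1) \<open>z \<noteq> y\<close> by (auto simp: doubleton_eq_iff)
    then have "z \<noteq> u" using matching_edges_eq[OF less.prems(3) \<open>g \<in> M'\<close> \<open>h \<in> M'\<close>, of z] g(1) h(1) by blast
    then have "{z, u} \<in> ?E" using False g(3) h(3) by (simp add: doubleton_in_interval_edges_iff)
    with less.prems(2-5) obtain N where N: "matching ?E N" "\<Union>N = \<Union>(M - {e})" "(M - {e}) \<inter> N = {}"
      using alternating_path_shortcut[of ?E M M' x y z u w] \<open>e \<in> M\<close> \<open>f \<in> M\<close> \<open>g \<in> M'\<close> \<open>h \<in> M'\<close>
        e(1) f(1) g(1,2) h(1,2) False by blast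
    have "card (M - {e}) < card M" using card_Diff1_less[OF less.prems(1) \<open>e \<in> M\<close>] .
    moreover have "M - {e} \<noteq> {}" using \<open>f \<in> M\<close> \<open>e \<noteq> f\<close> by blast
    ultimately have "\<exists>e'\<in>M - {e}. \<exists>f'\<in>M - {e}. nest_arc ?E I e' f' \<and> nest_arc ?E I f' e'"
      using less.hyps[of "M - {e}" N] less.prems(1,2) N matching_subset[OF less.prems(2), of "M - {e}"]
      by (simp add: Int_commute)
    then show ?thesis by blast
  qed
qed

end

lemma closed_interval_Inf_Sup: "closed_interval A \<Longrightarrow> Inf A \<le> Sup A \<and> A = {Inf A..Sup A}"
  unfolding closed_interval_def by auto

lemma distinct_matchings_double_arc:
  assumes "finite V" "\<forall>u\<in>V. closed_interval (I u)"
    and "matching (interval_edges V I) M" "matching (interval_edges V I) M'"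
    and "\<Union>M' = \<Union>M" "M' \<noteq> M"
  shows "\<exists>e\<in>M. \<exists>f\<in>M. nest_arc (interval_edges V I) I e f \<and> nest_arc (interval_edges V I) I f e"
proof -
  let ?E = "interval_edges V I"
  have "M - M \<inter> M' = M - M'" "M' - M' \<inter> M = M' - M" by blast+
  then have same_cover: "\<Union>(M' - M) = \<Union>(M - M')"
    using Union_Diff_matching[OF assms(3), of "M \<inter> M'"] Union_Diff_matching[OF assms(4), of "M' \<inter> M"]
      assms(5) by (simp add: Int_commute)
  have "M - M' \<noteq> {}"
  proof
    assume "M - M' = {}"
    then have "\<Union>(M' - M) = {}" using same_cover by (metis Union_empty)
    moreover have "M' \<subseteq> ?E" using assms(4) unfolding matching_def by blast
    ultimately have "M' - M = {}" using interval_edge_nonempty by blast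
    with \<open>M - M' = {}\<close> show False using assms(6) by blast
  qed
  moreover have "M \<subseteq> Pow V"
    using assms(3) interval_edges_subset_Pow[of V I] unfolding matching_def by blast
  then have "finite (M - M')" using assms(1) by (meson finite_Diff finite_Pow_iff finite_subset)
  moreover have "\<And>u. u \<in> V \<Longrightarrow> Inf (I u) \<le> Sup (I u) \<and> I u = {Inf (I u)..Sup (I u)}"
    using assms(2) closed_interval_Inf_Sup by blast
  ultimately have "\<exists>e\<in>M - M'. \<exists>f\<in>M - M'. nest_arc ?E I e f \<and> nest_arc ?E I f e"
    using disjoint_matchings_double_arc[where l = "\<lambda>u. Inf (I u)" and r = "\<lambda>u. Sup (I u)"
        and M = "M - M'" and M' = "M' - M"]
      matching_subset[OF assms(3) Diff_subset] matching_subset[OF assms(4) Diff_subset] same_cover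
    by (simp add: Diff_Int_distrib2 Int_Diff)
  then show ?thesis by blast
qed

lemma double_arc_rematch:
  assumes "matching (interval_edges V I) S" "e \<in> S" "f \<in> S"
    and "nest_arc (interval_edges V I) I e f" "nest_arc (interval_edges V I) I f e"
  obtains e' f' where "e' \<in> interval_edges V I" "f' \<in> interval_edges V I"
    "e' \<inter> f' = {}" "e' \<union> f' = e \<union> f" "e' \<notin> S"
proof -
  let ?E = "interval_edges V I"
  have "e \<noteq> f" "e \<in> ?E" "f \<in> ?E" using assms(4) unfolding nest_arc_def by blast+
  then have disj: "e \<inter> f = {}" using matching_disjoint[OF assms(1,2,3)] by blast
  obtain p where p: "p \<in> nestS I e" "p \<in> nestT I f" using assms(4) unfolding nest_arc_def by blast
  obtain q where q: "q \<in> nestS I f" "q \<in> nestT I e" using assms(5) unfolding nest_arc_def by blast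
  obtain u where "u \<in> e" "p \<in> I u" using p(1) unfolding nestS_def by blast
  obtain v where "v \<in> f" "q \<in> I v" using q(1) unfolding nestS_def by blast
  obtain u' where e: "e = {u, u'}" "u \<noteq> u'" "u \<in> V" "u' \<in> V"
    using \<open>e \<in> ?E\<close> \<open>u \<in> e\<close> by (blast elim: interval_edgesE)
  obtain v' where f: "f = {v, v'}" "v \<noteq> v'" "v \<in> V" "v' \<in> V"
    using \<open>f \<in> ?E\<close> \<open>v \<in> f\<close> by (blast elim: interval_edgesE)
  have "p \<in> I u \<inter> I v'" "q \<in> I u' \<inter> I v" using p q \<open>p \<in> I u\<close> \<open>q \<in> I v\<close> e(1) f(1) by auto
  moreover have "u \<noteq> v'" "u' \<noteq> v" using disj e(1) f(1) by auto
  ultimately have edges: "{u, v'} \<in> ?E" "{u', v} \<in> ?E"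
    using e f by (auto simp: doubleton_in_interval_edges_iff)
  show thesis
  proof
    show "{u, v'} \<in> ?E" "{u', v} \<in> ?E" by (fact edges)+
    show "{u, v'} \<inter> {u', v} = {}" "{u, v'} \<union> {u', v} = e \<union> f"
      using disj e(1,2) f(1,2) by auto
    show "{u, v'} \<notin> S"
    proof
      assume "{u, v'} \<in> S"
      then have "{u, v'} = e" using matching_edges_eq[OF assms(1) _ assms(2), of _ u] e(1) by blast
      then show False using disj e(1) f(1) by auto
    qed
  qed
qed

lemma strong_independent_imp_uniquely_restricted:
  assumes "finite V" "\<forall>u\<in>V. closed_interval (I u)" "S \<subseteq> interval_edges V I"
    and "strong_independent (nest_arc (interval_edges V I) I) S"
  shows "uniquely_restricted_matching (interval_edges V I) S"
  using strong_independent_imp_matching[OF assms(3,4)] assms(4)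
    distinct_matchings_double_arc[OF assms(1,2) strong_independent_imp_matching[OF assms(3,4)]]
  unfolding uniquely_restricted_matching_def strong_independent_def by metis

lemma uniquely_restricted_imp_strong_independent:
  assumes "uniquely_restricted_matching (interval_edges V I) S"
  shows "strong_independent (nest_arc (interval_edges V I) I) S"
  unfolding strong_independent_def
proof (intro ballI)
  fix e f assume ef: "e \<in> S" "f \<in> S"
  have S: "matching (interval_edges V I) S"
    using assms unfolding uniquely_restricted_matching_def by blast
  show "\<not> nest_arc (interval_edges V I) I e f \<or> \<not> nest_arc (interval_edges V I) I f e"
  proof (rule ccontr)
    assume "\<not> (\<not> nest_arc (interval_edges V I) I e f \<or> \<not> nest_arc (interval_edges V I) I f e)"
    then obtain e' f' where e'f': "e' \<in> interval_edges V I" "f' \<in> interval_edges V I"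
      "e' \<inter> f' = {}" "e' \<union> f' = e \<union> f" and "e' \<notin> S"
      using double_arc_rematch[OF S ef] by blast
    have "S - {e, f} \<union> {e', f'} \<noteq> S" using \<open>e' \<notin> S\<close> by blast
    with matching_exchange[OF S ef e'f'] assms show False
      unfolding uniquely_restricted_matching_def by blast
  qed
qed

theorem theorem9:
  fixes V :: "'a set" and I :: "'a \<Rightarrow> real set" and S :: "'a set set"
  assumes "finite V"
    and "\<forall>u\<in>V. closed_interval (I u)"
    and "S \<subseteq> interval_edges V I"
  shows "strong_independent (nest_arc (interval_edges V I) I) S \<longleftrightarrow>
         uniquely_restricted_matching (interval_edges V I) S"
  using strong_independent_imp_uniquely_restricted[OF assms]
    uniquely_restricted_imp_strong_independent by blast

end
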